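(* Let $A$ and $B$ be automata such that $B$ is deterministic and $A\le_{*T}B$. Then $A\le_F B$.
   Context: An automaton $A$ consists of a set $\mathrm{states}(A)$ of states, a nonempty set $\mathrm{start}(A)\subseteq\mathrm{states}(A)$ of start states, a set $\mathrm{acts}(A)$ of actions containing a distinguished internal action $\tau$, and a set $\mathrm{steps}(A)\subseteq\mathrm{states}(A)\times\mathrm{acts}(A)\times\mathrm{states}(A)$ of steps; write $s\xrightarrow{a}_A t$ for $(s,a,t)\in\mathrm{steps}(A)$. An execution fragment of $A$ is a finite or infinite alternating sequence $s_0a_1s_1a_2s_2\cdots$ of states and actions, beginning with a state and, if finite, ending with a state, such that $s_{i-1}\xrightarrow{a_i}_A s_i$ for all $i>0$. An execution is an execution fragment whose first state is a start state. The trace of an execution fragment is the subsequence of its non-$\tau$ actions; a trace of $A$ is the trace of some execution of $A$, and $\mathrm{traces}^*(A)$ is the set of finite traces of $A$. $A\le_{*T}B$ means $\mathrm{traces}^*(A)\subseteq\mathrm{traces}^*(B)$. For states $s,t$ and a finite sequence $\beta$ of non-$\tau$ actions, write $s\stackrel{\beta}{\Rightarrow}_A t$ if $A$ has a finite execution fragment starting in $s$, with trace $\beta$, ending in $t$. $A$ is deterministic if $|\mathrm{start}(A)|=1$ and for every state $s$ and finite sequence $\beta$ of non-$\tau$ actions there is at most one $t$ with $s\stackrel{\beta}{\Rightarrow}_A t$. For a relation $R$ write $R[s]=\{u\mid (s,u)\in R\}$. A normed forward simulation from $A$ to $B$ is a pair $(f,n)$ where $f\subseteq\mathrm{states}(A)\times\mathrm{states}(B)$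 and $n:\mathrm{steps}(A)\times\mathrm{states}(B)\to S$ for some set $S$ with a well-founded strict order $<$, such that: (1) if $s\in\mathrm{start}(A)$ then $f[s]\cap\mathrm{start}(B)\neq\emptyset$; (2) if $s\xrightarrow{a}_A t$ and $u\in f[s]$ then (a) $u\in f[t]$ and $a=\tau$, or (b) there is $v\in f[t]$ with $u\xrightarrow{a}_B v$, or (c) there is $v\in f[s]$ with $u\xrightarrow{\tau}_B v$ and $n(s\xrightarrow{a}t,v)<n(s\xrightarrow{a}t,u)$. Write $A\le_F B$ if one exists. *)

theory Defs
  imports Main
begin

text \<open>Automata over a common action type; the distinguished internal action is
  the parameter tau.\<close>

record ('s, 'a) automaton =
  aut_states :: "'s set"
  aut_start  :: "'s set"
  aut_acts   :: "'a set"
  aut_steps  :: "('s \<times> 'a \<times> 's) set"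

definition is_automaton :: "'a \<Rightarrow> ('s, 'a) automaton \<Rightarrow> bool" where
  "is_automaton tau A \<longleftrightarrow>
     aut_start A \<subseteq> aut_states A \<and> aut_start A \<noteq> {} \<and> tau \<in> aut_acts A \<and>
     aut_steps A \<subseteq> aut_states A \<times> aut_acts A \<times> aut_states A"

inductive weak_step :: "'a \<Rightarrow> ('s, 'a) automaton \<Rightarrow> 's \<Rightarrow> 'a list \<Rightarrow> 's \<Rightarrow> bool"
  for tau A where
  refl: "s \<in> aut_states A \<Longrightarrow> weak_step tau A s [] s"
| step: "(s, a, s') \<in> aut_steps A \<Longrightarrow> weak_step tau A s' beta t \<Longrightarrow>
         weak_step tau A s (if a = tau then beta else a # beta) t"

definition fin_traces :: "'a \<Rightarrow> ('s, 'a) automaton \<Rightarrow> 'a list set" where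
  "fin_traces tau A = {beta. \<exists>s0 t. s0 \<in> aut_start A \<and> weak_step tau A s0 beta t}"

definition trace_incl :: "'a \<Rightarrow> ('s1, 'a) automaton \<Rightarrow> ('s2, 'a) automaton \<Rightarrow> bool" where
  "trace_incl tau A B \<longleftrightarrow> fin_traces tau A \<subseteq> fin_traces tau B"

definition deterministic :: "'a \<Rightarrow> ('s, 'a) automaton \<Rightarrow> bool" where
  "deterministic tau A \<longleftrightarrow> card (aut_start A) = 1 \<and>
     (\<forall>s beta t t'. (\<forall>x\<in>set beta. x \<noteq> tau) \<and> weak_step tau A s beta t \<and> weak_step tau A s beta t'
        \<longrightarrow> t = t')"

text \<open>Normed forward simulation (f, n) with norm values in a set 'c ordered by
  the well-founded strict order R (pairs (x, y) \<in> R mean x < y).\<close>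

definition normed_fwd_sim ::
  "'a \<Rightarrow> ('s1, 'a) automaton \<Rightarrow> ('s2, 'a) automaton \<Rightarrow> ('s1 \<times> 's2) set
   \<Rightarrow> (('s1 \<times> 'a \<times> 's1) \<Rightarrow> 's2 \<Rightarrow> 'c) \<Rightarrow> ('c \<times> 'c) set \<Rightarrow> bool" where
  "normed_fwd_sim tau A B f n R \<longleftrightarrow>
     f \<subseteq> aut_states A \<times> aut_states B \<and> wf R \<and> trans R \<and>
     (\<forall>s\<in>aut_start A. f `` {s} \<inter> aut_start B \<noteq> {}) \<and>
     (\<forall>s a t u. (s, a, t) \<in> aut_steps A \<and> u \<in> f `` {s} \<longrightarrow>
        (u \<in> f `` {t} \<and> a = tau) \<or>
        (\<exists>v \<in> f `` {t}. (u, a, v) \<in> aut_steps B) \<or>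
        (\<exists>v \<in> f `` {s}. (u, tau, v) \<in> aut_steps B \<and> (n (s, a, t) v, n (s, a, t) u) \<in> R))"

definition fwd_le :: "'c itself \<Rightarrow> 'a \<Rightarrow> ('s1, 'a) automaton \<Rightarrow> ('s2, 'a) automaton \<Rightarrow> bool" where
  "fwd_le _ tau A B \<longleftrightarrow>
     (\<exists>f (n :: ('s1 \<times> 'a \<times> 's1) \<Rightarrow> 's2 \<Rightarrow> 'c) R. normed_fwd_sim tau A B f n R)"

end

theory Submission
  imports Defs
begin

text \<open>In a deterministic automaton B every \<open>\<tau>\<close>-step is a self-loop, and each trace leads from the
  start state to a unique state. Relate a state s of A to a state u of B if some trace leads from
  start states to both. A visible step of A from s extends this trace; trace inclusion lets B
  follow the extended trace, and by determinism it does so from u itself, with a single step since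
  \<open>\<tau>\<close>-steps of B do not move.\<close>

lemma weak_step_states:
  assumes "aut_steps A \<subseteq> aut_states A \<times> aut_acts A \<times> aut_states A"
  shows "weak_step tau A s beta t \<Longrightarrow> s \<in> aut_states A \<and> t \<in> aut_states A"
  by (induction rule: weak_step.induct) (use assms in auto)

lemma weak_step_visible: "weak_step tau A s beta t \<Longrightarrow> \<forall>x\<in>set beta. x \<noteq> tau"
  by (induction rule: weak_step.induct) auto

lemma weak_step_single:
  assumes "(s, a, t) \<in> aut_steps A" and "t \<in> aut_states A"
  shows "weak_step tau A s (if a = tau then [] else [a]) t"
  using weak_step.step[OF assms(1) weak_step.refl[OF assms(2)]] by simp

lemma weak_step_append:
  "weak_step tau A s beta t \<Longrightarrow> weak_step tau A t gamma r \<Longrightarrow> weak_step tau A s (beta @ gamma) r"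
proof (induction rule: weak_step.induct)
  case (refl s)
  then show ?case by simp
next
  case (step s a s' beta t)
  have "weak_step tau A s (if a = tau then beta @ gamma else a # beta @ gamma) r"
    using weak_step.step[OF step.hyps(1) step.IH[OF step.prems]] by simp
  then show ?case by (cases "a = tau") simp_all
qed

lemma weak_step_append_split:
  assumes "aut_steps A \<subseteq> aut_states A \<times> aut_acts A \<times> aut_states A"
  shows "weak_step tau A s (beta @ gamma) r \<Longrightarrow> \<exists>t. weak_step tau A s beta t \<and> weak_step tau A t gamma r"
proof (induction s "beta @ gamma" r arbitrary: beta rule: weak_step.induct)
  case (refl s)
  then show ?case using weak_step.refl[of s A tau] by auto
next
  case (step s a s' delta t)
  note trace = \<open>(if a = tau then delta else a # delta) = beta @ gamma\<close>
  show ?case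
  proof (cases "a \<noteq> tau \<and> beta \<noteq> []")
    case True
    then obtain beta' where beta: "beta = a # beta'" and "delta = beta' @ gamma"
      using trace by (cases beta) auto
    then obtain t' where s'_t': "weak_step tau A s' beta' t'" and "weak_step tau A t' gamma t"
      using step.hyps(3) by blast
    then show ?thesis
      using weak_step.step[OF step.hyps(1) s'_t'] True beta by auto
  next
    case False
    then consider "a = tau" | "beta = []" by blast
    then show ?thesis
    proof cases
      case 1
      then obtain t' where s'_t': "weak_step tau A s' beta t'" and "weak_step tau A t' gamma t"
        using step.hyps(3) trace by auto
      then show ?thesis
        using weak_step.step[OF step.hyps(1) s'_t'] \<open>a = tau\<close> by auto
    next
      case 2
      have "s \<in> aut_states A" using step.hyps(1) assms by auto
      then have "weak_step tau A s [] s" by (rule weak_step.refl)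
      then show ?thesis
        using weak_step.step[OF step.hyps(1) step.hyps(2)] trace \<open>beta = []\<close> by auto
    qed
  qed
qed

lemma weak_step_Cons_first_step:
  assumes "\<And>u v. (u, tau, v) \<in> aut_steps A \<Longrightarrow> u = v" and "a \<noteq> tau"
  shows "weak_step tau A s (a # gamma) r \<Longrightarrow> \<exists>v. (s, a, v) \<in> aut_steps A \<and> weak_step tau A v gamma r"
proof (induction s "a # gamma" r rule: weak_step.induct)
  case (step s b s' beta t)
  then show ?case using assms(1) by (cases "b = tau") auto
qed

lemma trace_inclD:
  assumes "trace_incl tau A B" "s0 \<in> aut_start A" "weak_step tau A s0 beta s"
  obtains u0 u where "u0 \<in> aut_start B" "weak_step tau B u0 beta u"
  using assms unfolding trace_incl_def fin_traces_def by blast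

lemma deterministic_start_unique:
  "deterministic tau B \<Longrightarrow> u \<in> aut_start B \<Longrightarrow> u' \<in> aut_start B \<Longrightarrow> u = u'"
  unfolding deterministic_def by (metis card_1_singletonE singletonD)

lemma deterministic_weak_step_unique:
  "deterministic tau B \<Longrightarrow> weak_step tau B u beta v \<Longrightarrow> weak_step tau B u beta v' \<Longrightarrow> v = v'"
  unfolding deterministic_def by (metis weak_step_visible)

lemma deterministic_tau_step_loop:
  assumes "is_automaton tau B" "deterministic tau B" "(u, tau, v) \<in> aut_steps B"
  shows "u = v"
proof -
  have "u \<in> aut_states B" "v \<in> aut_states B"
    using assms(1,3) unfolding is_automaton_def by auto
  then have "weak_step tau B u [] u" "weak_step tau B u [] v"
    using weak_step.refl weak_step_single[OF assms(3), of tau] by auto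
  then show ?thesis using deterministic_weak_step_unique[OF assms(2)] by blast
qed

lemma deterministic_weak_step_snoc:
  assumes "is_automaton tau B" "deterministic tau B" "a \<noteq> tau"
    and "weak_step tau B u0 beta u" "weak_step tau B u0 (beta @ [a]) w"
  shows "\<exists>v. (u, a, v) \<in> aut_steps B"
proof -
  have steps: "aut_steps B \<subseteq> aut_states B \<times> aut_acts B \<times> aut_states B"
    using assms(1) unfolding is_automaton_def by blast
  obtain x where "weak_step tau B u0 beta x" "weak_step tau B x [a] w"
    using weak_step_append_split[OF steps assms(5)] by blast
  moreover have "x = u"
    using deterministic_weak_step_unique[OF assms(2) \<open>weak_step tau B u0 beta x\<close> assms(4)] .
  ultimately show ?thesis
    using weak_step_Cons_first_step[OF deterministic_tau_step_loop[OF assms(1,2)] assms(3)] by blast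
qed

definition common_trace_rel ::
  "'a \<Rightarrow> ('s1, 'a) automaton \<Rightarrow> ('s2, 'a) automaton \<Rightarrow> ('s1 \<times> 's2) set" where
  "common_trace_rel tau A B = {(s, u). \<exists>beta s0 u0.
     s0 \<in> aut_start A \<and> weak_step tau A s0 beta s \<and> u0 \<in> aut_start B \<and> weak_step tau B u0 beta u}"

lemma common_trace_rel_states:
  assumes "is_automaton tau A" "is_automaton tau B"
  shows "common_trace_rel tau A B \<subseteq> aut_states A \<times> aut_states B"
proof -
  have "aut_steps A \<subseteq> aut_states A \<times> aut_acts A \<times> aut_states A"
    and "aut_steps B \<subseteq> aut_states B \<times> aut_acts B \<times> aut_states B"
    using assms unfolding is_automaton_def by blast+
  then show ?thesis
    unfolding common_trace_rel_def by (auto dest: weak_step_states)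
qed

lemma common_trace_rel_start:
  assumes "is_automaton tau A" "is_automaton tau B" "trace_incl tau A B" "s \<in> aut_start A"
  shows "common_trace_rel tau A B `` {s} \<inter> aut_start B \<noteq> {}"
proof -
  have "weak_step tau A s [] s"
    using assms(1,4) unfolding is_automaton_def by (blast intro: weak_step.refl)
  then obtain u0 u where "u0 \<in> aut_start B"
    using trace_inclD[OF assms(3,4)] by blast
  moreover have "weak_step tau B u0 [] u0"
    using assms(2) \<open>u0 \<in> aut_start B\<close> unfolding is_automaton_def by (blast intro: weak_step.refl)
  ultimately show ?thesis
    using assms(4) \<open>weak_step tau A s [] s\<close> unfolding common_trace_rel_def by blast
qed

lemma common_trace_rel_step:
  assumes "is_automaton tau A" "is_automaton tau B" "deterministic tau B" "trace_incl tau A B"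
    and step: "(s, a, t) \<in> aut_steps A" and rel: "(s, u) \<in> common_trace_rel tau A B"
  shows "(u \<in> common_trace_rel tau A B `` {t} \<and> a = tau) \<or>
    (\<exists>v \<in> common_trace_rel tau A B `` {t}. (u, a, v) \<in> aut_steps B)"
proof -
  obtain beta s0 u0 where s0: "s0 \<in> aut_start A" "weak_step tau A s0 beta s"
    and u0: "u0 \<in> aut_start B" "weak_step tau B u0 beta u"
    using rel unfolding common_trace_rel_def by blast
  have "t \<in> aut_states A" using assms(1) step unfolding is_automaton_def by auto
  then have s0_t: "weak_step tau A s0 (beta @ (if a = tau then [] else [a])) t"
    using weak_step_append[OF s0(2) weak_step_single[OF step]] by blast
  show ?thesis
  proof (cases "a = tau")
    case True
    then show ?thesis using s0_t s0(1) u0 unfolding common_trace_rel_def by auto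
  next
    case False
    then have "weak_step tau A s0 (beta @ [a]) t"
      using s0_t by simp
    then obtain u1 w where "u1 \<in> aut_start B" "weak_step tau B u1 (beta @ [a]) w"
      by (rule trace_inclD[OF assms(4) s0(1)])
    then have "weak_step tau B u0 (beta @ [a]) w"
      using deterministic_start_unique[OF assms(3) u0(1)] by blast
    then obtain v where v: "(u, a, v) \<in> aut_steps B"
      using deterministic_weak_step_snoc[OF assms(2,3) False u0(2)] by blast
    have "v \<in> aut_states B" using assms(2) v unfolding is_automaton_def by auto
    then have "weak_step tau B u0 (beta @ [a]) v"
      using weak_step_append[OF u0(2) weak_step_single[OF v]] False by simp
    then have "v \<in> common_trace_rel tau A B `` {t}"
      using s0_t s0(1) u0(1) False unfolding common_trace_rel_def by auto
    then show ?thesis using v by blast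
  qed
qed

lemma fwd_le_if_unnormed_fwd_sim:
  assumes "f \<subseteq> aut_states A \<times> aut_states B"
    and "\<forall>s\<in>aut_start A. f `` {s} \<inter> aut_start B \<noteq> {}"
    and "\<And>s a t u. (s, a, t) \<in> aut_steps A \<Longrightarrow> u \<in> f `` {s} \<Longrightarrow>
      (u \<in> f `` {t} \<and> a = tau) \<or> (\<exists>v \<in> f `` {t}. (u, a, v) \<in> aut_steps B)"
  shows "fwd_le TYPE('c) tau A B"
proof -
  have "normed_fwd_sim tau A B f (\<lambda>_ _. undefined :: 'c) {}"
    unfolding normed_fwd_sim_def trans_def using assms by blast
  then show ?thesis unfolding fwd_le_def by blast
qed

theorem mainTheorem5:
  fixes tau :: 'a
    and A :: "('s1, 'a) automaton"
    and B :: "('s2, 'a) automaton"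
  assumes "is_automaton tau A"
    and "is_automaton tau B"
    and "deterministic tau B"
    and "trace_incl tau A B"
  shows "fwd_le TYPE('c) tau A B"
proof (rule fwd_le_if_unnormed_fwd_sim)
  show "common_trace_rel tau A B \<subseteq> aut_states A \<times> aut_states B"
    using common_trace_rel_states[OF assms(1,2)] .
  show "\<forall>s\<in>aut_start A. common_trace_rel tau A B `` {s} \<inter> aut_start B \<noteq> {}"
    using common_trace_rel_start[OF assms(1,2,4)] by blast
  show "(u \<in> common_trace_rel tau A B `` {t} \<and> a = tau) \<or>
      (\<exists>v \<in> common_trace_rel tau A B `` {t}. (u, a, v) \<in> aut_steps B)"
    if "(s, a, t) \<in> aut_steps A" "u \<in> common_trace_rel tau A B `` {s}" for s a t u
    using common_trace_rel_step[OF assms that(1)] that(2) by blast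
qed

end
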